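(* Let $n$ training samples carry labels in $\{1,\dots,K\}$ with indicator matrix $F\in\mathbb{R}^{K\times n}$, $n_k$ samples in class $k$. Let the basis $G_1,\dots,G_r$ ($r\le n$) be a subset of the training samples, with $r_k\ge1$ basis vectors in class $k$, and let $F_{G_i}$ be the class indicator of $G_i$. Let $W\in\mathbb{R}^{r\times n}$ be entrywise nonnegative with positive column sums, $S=\operatorname{diag}(\mathbf{1}^TW)$, $\tilde W=WS^{-1}$ of full row rank, $X^*=F\tilde W^T(\tilde W\tilde W^T)^{-1}$, and assume $F\tilde W^T\neq0$. Define the fitting error $\epsilon=\|F-X^*\tilde W\|_F^2/\|X^*\tilde W\|_F^2+1$ and the spectral risk $\gamma=\|X^*\|_F^2\|\tilde W\|_F^2/\|X^*\tilde W\|_F^2$. If $W_{ij}=0$ whenever $F_{G_i}\neq F_j$ (ideal bipartite-graph condition), then $\epsilon=1$ and $$\frac{r}{n}\sum_{k=1}^K\frac{n_k}{r_k}\le\gamma\le r.$$ The upper bound is attained when every column of $\tilde W$ has exactly one nonzero entry; the lower bound is attained if and only if $r_k=1$ for all $k$.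
   Context: The columns of $F$ are standard basis vectors of $\mathbb{R}^K$: $F_j=e_k$ iff sample $j$ is in class $k$. $W_{ij}$ is the similarity between basis vector $G_i$ and training sample $j$; each column of $\tilde W$ sums to one. $X^*$ minimizes $\|F-X\tilde W\|_F^2$. *)

theory Defs
  imports "HOL-Analysis.Analysis"
begin

text \<open>Samples are indexed by a finite type 'n (n = CARD('n)), classes by 'k
(K = CARD('k)), basis vectors by 'r (r = CARD('r)). Matrices are
real^cols^rows, so a K x n matrix is real^'n^'k.\<close>

definition indicator_matrix :: "('n \<Rightarrow> 'k) \<Rightarrow> real^'n^'k" where
  "indicator_matrix lab = (\<chi> k j. if lab j = k then 1 else 0)"

definition col_sum_diag :: "real^'n^'r \<Rightarrow> real^'n^'n" where
  "col_sum_diag W = (\<chi> i j. if i = j then (\<Sum>l\<in>UNIV. W $ l $ j) else 0)"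

definition normalize_cols :: "real^'n^'r \<Rightarrow> real^'n^'r" where
  "normalize_cols W = W ** matrix_inv (col_sum_diag W)"

definition lsq_solution :: "real^'n^'k \<Rightarrow> real^'n^'r \<Rightarrow> real^'r^'k" where
  "lsq_solution F Wt = F ** transpose Wt ** matrix_inv (Wt ** transpose Wt)"

text \<open>Squared Frobenius norm: the norm on real^'a^'b is the Euclidean (Frobenius) norm.\<close>
definition frob2 :: "real^'a^'b \<Rightarrow> real" where
  "frob2 A = (norm A)\<^sup>2"

definition fitting_error :: "real^'n^'k \<Rightarrow> real^'n^'r \<Rightarrow> real" where
  "fitting_error F Wt = frob2 (F - lsq_solution F Wt ** Wt) / frob2 (lsq_solution F Wt ** Wt) + 1"

definition spectral_risk :: "real^'n^'k \<Rightarrow> real^'n^'r \<Rightarrow> real" where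
  "spectral_risk F Wt = frob2 (lsq_solution F Wt) * frob2 Wt / frob2 (lsq_solution F Wt ** Wt)"

end

theory Submission
  imports Defs
begin

text \<open>Under the ideal condition every column of \<open>W\<^sub>t\<close> is a probability vector supported on
the basis vectors of its own class, so \<open>F = F\<^sub>G W\<^sub>t\<close> with \<open>F\<^sub>G\<close> the class indicator of the
basis; full row rank makes \<open>W\<^sub>t W\<^sub>t\<^sup>T\<close> invertible, hence \<open>X\<^sup>* = F\<^sub>G\<close> and the fit is exact.
Since \<open>\<parallel>F\<^sub>G\<parallel>\<^sup>2 = r\<close> and \<open>\<parallel>F\<parallel>\<^sup>2 = n\<close>, \<open>\<gamma> = (r/n) \<parallel>W\<^sub>t\<parallel>\<^sup>2\<close>, and the bounds are column-wise:
a probability vector on a set of size \<open>m\<close> has squared norm between \<open>1/m\<close> and \<open>1\<close>, the lower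
value exactly for the uniform vector. Uniform columns with some \<open>r\<^sub>k \<ge> 2\<close> would make two rows of
\<open>W\<^sub>t\<close> equal, contradicting full row rank.\<close>

lemma matrix_inv_inverse:
  fixes A :: "'a::semiring_1^'n^'m"
  assumes "invertible A"
  shows "A ** matrix_inv A = mat 1" and "matrix_inv A ** A = mat 1"
  using someI_ex[OF assms[unfolded invertible_def]] by (auto simp: matrix_inv_def)

lemma matrix_inv_unique:
  fixes A :: "'a::semiring_1^'n^'m"
  assumes AB: "A ** B = mat 1" and "B ** A = mat 1"
  shows "matrix_inv A = B"
proof -
  have "invertible A" using assms unfolding invertible_def by blast
  have "matrix_inv A = matrix_inv A ** (A ** B)" by (simp add: AB matrix_mul_rid)
  also have "\<dots> = B" by (simp add: matrix_mul_assoc matrix_inv_inverse(2)[OF \<open>invertible A\<close>] matrix_mul_lid)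
  finally show ?thesis .
qed

lemma normalize_cols_nth:
  fixes W :: "real^'n^'r"
  assumes "\<And>j. (\<Sum>l\<in>UNIV. W $ l $ j) \<noteq> 0"
  shows "normalize_cols W $ i $ j = W $ i $ j / (\<Sum>l\<in>UNIV. W $ l $ j)"
proof -
  define s where "s j = (\<Sum>l\<in>UNIV. W $ l $ j)" for j
  define D :: "real^'n^'n" where "D = (\<chi> i j. if i = j then 1 / s j else 0)"
  have "col_sum_diag W ** D = mat 1" "D ** col_sum_diag W = mat 1"
    using assms by (simp_all add: col_sum_diag_def D_def s_def matrix_matrix_mult_def mat_def vec_eq_iff
        if_distrib[of "\<lambda>x. x * _"] if_distrib[of "\<lambda>x. _ * x"] cong: if_cong)
  then have "matrix_inv (col_sum_diag W) = D" by (rule matrix_inv_unique)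
  then show ?thesis
    by (simp add: normalize_cols_def D_def matrix_matrix_mult_def if_distrib s_def cong: if_cong)
qed

lemma row_eq_nth: "row i A = A $ i"
  by (simp add: row_def vec_eq_iff)

lemma inj_rows_of_full_row_rank:
  fixes A :: "real^'n^'m"
  assumes "rank A = CARD('m)"
  shows "inj (($) A)"
proof (rule injI)
  fix i i' assume "A $ i = A $ i'"
  then have "transpose A *v axis i 1 = transpose A *v axis i' 1"
    by (simp add: matrix_vector_mult_basis row_eq_nth del: transpose_matrix_vector)
  moreover have "inj ((*v) (transpose A))"
    using assms by (simp add: full_rank_injective[symmetric] rank_transpose)
  ultimately have "axis i (1::real) = axis i' 1" by (metis injD)
  then show "i = i'" by (simp add: axis_eq_axis)
qed

lemma invertible_mult_transpose:
  fixes A :: "real^'n^'m"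
  assumes "rank A = CARD('m)"
  shows "invertible (A ** transpose A)"
proof -
  have "x = 0" if "(A ** transpose A) *v x = 0" for x
  proof -
    have "inner (transpose A *v x) (transpose A *v x) = inner x (A *v (transpose A *v x))"
      by (metis dot_lmul_matrix transpose_matrix_vector)
    also have "\<dots> = 0"
      using that by (simp add: matrix_vector_mul_assoc del: transpose_matrix_vector)
    finally have "transpose A *v x = transpose A *v 0" by simp
    moreover have "inj ((*v) (transpose A))"
      using assms by (simp add: full_rank_injective[symmetric] rank_transpose)
    ultimately show "x = 0" by (metis injD)
  qed
  then show ?thesis by (simp add: invertible_left_inverse matrix_left_invertible_ker)
qed

lemma lsq_solution_mult:
  fixes P :: "real^'r^'k" and Wt :: "real^'n^'r"
  assumes "rank Wt = CARD('r)"
  shows "lsq_solution (P ** Wt) Wt = P"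
  using matrix_inv_inverse(1)[OF invertible_mult_transpose[OF assms]]
  by (simp add: lsq_solution_def matrix_mul_assoc[symmetric] matrix_mul_rid)

lemma frob2_eq_sum: "frob2 (A::real^'n^'m) = (\<Sum>i\<in>UNIV. \<Sum>j\<in>UNIV. (A $ i $ j)\<^sup>2)"
  by (simp add: frob2_def norm_vec_def L2_set_def sum_nonneg)

lemma frob2_indicator_matrix: "frob2 (indicator_matrix (lab :: 'n::finite \<Rightarrow> 'k::finite)) = CARD('n)"
proof -
  have "frob2 (indicator_matrix lab) = (\<Sum>k\<in>UNIV. \<Sum>j\<in>UNIV. (if lab j = k then 1 else 0))"
    by (simp add: frob2_eq_sum indicator_matrix_def if_distrib[of "\<lambda>x. x\<^sup>2"] cong: if_cong)
  also have "\<dots> = (\<Sum>j\<in>UNIV. \<Sum>k\<in>UNIV. (if lab j = k then 1 else 0))"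
    by (rule sum.swap)
  finally show ?thesis by simp
qed

lemma sum_power2_le_one:
  fixes x :: "'a \<Rightarrow> real"
  assumes "finite A" and "\<And>i. i \<in> A \<Longrightarrow> x i \<ge> 0" and "sum x A = 1"
  shows "(\<Sum>i\<in>A. (x i)\<^sup>2) \<le> 1"
proof -
  have "(x i)\<^sup>2 \<le> x i" if "i \<in> A" for i
  proof -
    have "x i \<le> 1" using member_le_sum[of i A x] assms that by simp
    then show ?thesis using assms(2)[OF that] by (simp add: power2_eq_square mult_left_le)
  qed
  then have "(\<Sum>i\<in>A. (x i)\<^sup>2) \<le> sum x A" by (rule sum_mono)
  then show ?thesis using assms(3) by simp
qed

lemma sum_power2_eq_inverse_card_plus_deviation:
  fixes x :: "'a \<Rightarrow> real"
  assumes "finite A" and "sum x A = 1"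
  shows "(\<Sum>i\<in>A. (x i)\<^sup>2) = 1 / card A + (\<Sum>i\<in>A. (x i - 1 / card A)\<^sup>2)"
proof -
  have "card A \<noteq> 0" using assms by auto
  have "(\<Sum>i\<in>A. (x i - 1 / card A)\<^sup>2)
      = (\<Sum>i\<in>A. (x i)\<^sup>2 - 2 / card A * x i + 1 / (card A)\<^sup>2)"
    by (intro sum.cong) (simp_all add: power2_diff field_simps)
  also have "\<dots> = (\<Sum>i\<in>A. (x i)\<^sup>2) - 2 / card A * sum x A + card A / (card A)\<^sup>2"
    by (simp add: sum.distrib sum_subtractf sum_distrib_left)
  also have "\<dots> = (\<Sum>i\<in>A. (x i)\<^sup>2) - 1 / card A"
    using assms(2) \<open>card A \<noteq> 0\<close> by (simp add: field_simps power2_eq_square)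
  finally show ?thesis by simp
qed

lemma inverse_card_le_sum_power2:
  fixes x :: "'a \<Rightarrow> real"
  assumes "finite A" and "sum x A = 1"
  shows "1 / card A \<le> (\<Sum>i\<in>A. (x i)\<^sup>2)"
  by (simp add: sum_power2_eq_inverse_card_plus_deviation[OF assms] sum_nonneg)

lemma sum_power2_eq_inverse_card_iff:
  fixes x :: "'a \<Rightarrow> real"
  assumes "finite A" and "sum x A = 1"
  shows "(\<Sum>i\<in>A. (x i)\<^sup>2) = 1 / card A \<longleftrightarrow> (\<forall>i\<in>A. x i = 1 / card A)"
  using assms by (simp add: sum_power2_eq_inverse_card_plus_deviation sum_nonneg_eq_0_iff)

lemma sum_power2_eq_power2_sum_if_single_support:
  fixes x :: "'a \<Rightarrow> real"
  assumes "finite A" and "a \<in> A" and "\<And>i. i \<in> A \<Longrightarrow> i \<noteq> a \<Longrightarrow> x i = 0"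
  shows "(\<Sum>i\<in>A. (x i)\<^sup>2) = (sum x A)\<^sup>2"
proof -
  have "sum f A = f a" if "\<And>i. i \<in> A \<Longrightarrow> i \<noteq> a \<Longrightarrow> f i = 0" for f :: "'a \<Rightarrow> real"
    using assms(1,2) that by (simp add: sum.remove)
  then show ?thesis using assms(3) by simp
qed

locale ideal_bipartite_graph =
  fixes lab :: "'n::finite \<Rightarrow> 'k::finite" and g :: "'r::finite \<Rightarrow> 'n" and W :: "real^'n^'r"
  assumes W_nonneg: "\<And>i j. W $ i $ j \<ge> 0"
    and W_col_sum_pos: "\<And>j. (\<Sum>i\<in>UNIV. W $ i $ j) > 0"
    and full_row_rank: "rank (normalize_cols W) = CARD('r)"
    and ideal: "\<And>i j. lab (g i) \<noteq> lab j \<Longrightarrow> W $ i $ j = 0"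
begin

definition class_basis :: "'n \<Rightarrow> 'r set" where
  "class_basis j = {i. lab (g i) = lab j}"

lemma normalize_cols_W_nth: "normalize_cols W $ i $ j = W $ i $ j / (\<Sum>l\<in>UNIV. W $ l $ j)"
  by (rule normalize_cols_nth) (metis W_col_sum_pos less_irrefl)

lemma normalize_cols_W_nonneg: "normalize_cols W $ i $ j \<ge> 0"
  by (simp add: normalize_cols_W_nth W_nonneg sum_nonneg)

lemma normalize_cols_W_eq_0: "lab (g i) \<noteq> lab j \<Longrightarrow> normalize_cols W $ i $ j = 0"
  by (simp add: normalize_cols_W_nth ideal)

lemma normalize_cols_W_col_sum: "(\<Sum>i\<in>UNIV. normalize_cols W $ i $ j) = 1"
  using W_col_sum_pos[of j] by (simp add: normalize_cols_W_nth flip: sum_divide_distrib)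

lemma sum_class_basis:
  "(\<Sum>i\<in>class_basis j. f i) = (\<Sum>i\<in>UNIV. f i)"
  if "\<And>i. lab (g i) \<noteq> lab j \<Longrightarrow> f i = 0" for f :: "'r \<Rightarrow> real"
  by (rule sum.mono_neutral_left) (auto simp: class_basis_def that)

lemma indicator_matrix_eq_mult:
  "indicator_matrix lab = indicator_matrix (lab \<circ> g) ** normalize_cols W"
proof -
  have "(\<Sum>i\<in>UNIV. (if lab (g i) = k then 1 else 0) * normalize_cols W $ i $ j)
      = (if lab j = k then 1 else 0)" for k j
  proof (cases "lab j = k")
    case True
    then have "(\<Sum>i\<in>UNIV. (if lab (g i) = k then 1 else 0) * normalize_cols W $ i $ j)
        = (\<Sum>i\<in>UNIV. normalize_cols W $ i $ j)"
      by (intro sum.cong) (auto simp: normalize_cols_W_eq_0)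
    then show ?thesis using True normalize_cols_W_col_sum by simp
  next
    case False
    then show ?thesis by (auto simp: normalize_cols_W_eq_0 intro!: sum.neutral)
  qed
  then show ?thesis
    by (simp add: indicator_matrix_def matrix_matrix_mult_def vec_eq_iff)
qed

lemma lsq_solution_eq:
  "lsq_solution (indicator_matrix lab) (normalize_cols W) = indicator_matrix (lab \<circ> g)"
  by (subst indicator_matrix_eq_mult) (rule lsq_solution_mult[OF full_row_rank])

lemma fitting_error_eq_1: "fitting_error (indicator_matrix lab) (normalize_cols W) = 1"
  by (simp add: fitting_error_def lsq_solution_eq frob2_def flip: indicator_matrix_eq_mult)

lemma spectral_risk_eq:
  "spectral_risk (indicator_matrix lab) (normalize_cols W)
     = CARD('r) / CARD('n) * (\<Sum>j\<in>UNIV. \<Sum>i\<in>UNIV. (normalize_cols W $ i $ j)\<^sup>2)"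
proof -
  have "frob2 (normalize_cols W) = (\<Sum>j\<in>UNIV. \<Sum>i\<in>UNIV. (normalize_cols W $ i $ j)\<^sup>2)"
    unfolding frob2_eq_sum by (rule sum.swap)
  then show ?thesis
    by (simp add: spectral_risk_def lsq_solution_eq frob2_indicator_matrix flip: indicator_matrix_eq_mult)
qed


lemma col_norm2_le_1: "(\<Sum>i\<in>UNIV. (normalize_cols W $ i $ j)\<^sup>2) \<le> 1"
  by (rule sum_power2_le_one) (simp_all add: normalize_cols_W_nonneg normalize_cols_W_col_sum)

lemma col_norm2_class_basis:
  "(\<Sum>i\<in>UNIV. (normalize_cols W $ i $ j)\<^sup>2) = (\<Sum>i\<in>class_basis j. (normalize_cols W $ i $ j)\<^sup>2)"
  and col_sum_class_basis: "(\<Sum>i\<in>class_basis j. normalize_cols W $ i $ j) = 1"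
  by (simp_all add: sum_class_basis normalize_cols_W_eq_0 normalize_cols_W_col_sum)

lemma inverse_card_class_basis_le_col_norm2:
  "1 / card (class_basis j) \<le> (\<Sum>i\<in>UNIV. (normalize_cols W $ i $ j)\<^sup>2)"
  unfolding col_norm2_class_basis by (rule inverse_card_le_sum_power2) (simp_all add: col_sum_class_basis)

lemma col_norm2_eq_inverse_card_class_basis_iff:
  "(\<Sum>i\<in>UNIV. (normalize_cols W $ i $ j)\<^sup>2) = 1 / card (class_basis j)
     \<longleftrightarrow> (\<forall>i\<in>class_basis j. normalize_cols W $ i $ j = 1 / card (class_basis j))"
  unfolding col_norm2_class_basis by (rule sum_power2_eq_inverse_card_iff) (simp_all add: col_sum_class_basis)

lemma sum_inverse_card_class_basis:
  "(\<Sum>j\<in>UNIV. 1 / card (class_basis j))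
     = (\<Sum>k\<in>UNIV. real (card {j. lab j = k}) / real (card {i. lab (g i) = k}))"
  using sum_fun_comp[of UNIV UNIV lab "\<lambda>k. 1 / real (card {i. lab (g i) = k})"]
  by (simp add: class_basis_def)


lemma spectral_risk_le_card:
  "spectral_risk (indicator_matrix lab) (normalize_cols W) \<le> CARD('r)"
proof -
  have "(\<Sum>j\<in>UNIV. \<Sum>i\<in>UNIV. (normalize_cols W $ i $ j)\<^sup>2) \<le> (\<Sum>j\<in>(UNIV::'n set). 1)"
    by (intro sum_mono col_norm2_le_1)
  then show ?thesis by (simp add: spectral_risk_eq field_simps)
qed

lemma spectral_risk_ge:
  "CARD('r) / CARD('n) * (\<Sum>k\<in>UNIV. real (card {j. lab j = k}) / real (card {i. lab (g i) = k}))
     \<le> spectral_risk (indicator_matrix lab) (normalize_cols W)"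
  unfolding spectral_risk_eq sum_inverse_card_class_basis[symmetric]
  by (intro mult_left_mono sum_mono inverse_card_class_basis_le_col_norm2) simp

lemma spectral_risk_eq_card_if_single_support:
  assumes "\<forall>j. \<exists>!i. normalize_cols W $ i $ j \<noteq> 0"
  shows "spectral_risk (indicator_matrix lab) (normalize_cols W) = CARD('r)"
proof -
  have "(\<Sum>i\<in>UNIV. (normalize_cols W $ i $ j)\<^sup>2) = 1" for j
  proof -
    obtain a where "\<And>i. i \<noteq> a \<Longrightarrow> normalize_cols W $ i $ j = 0" using assms by metis
    then show ?thesis
      by (simp add: sum_power2_eq_power2_sum_if_single_support[of UNIV a] normalize_cols_W_col_sum)
  qed
  then show ?thesis by (simp add: spectral_risk_eq)
qed


lemma uniform_cols_iff_single_basis_per_class: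
  assumes "\<And>k. card {i. lab (g i) = k} \<ge> 1"
  shows "(\<forall>j. \<forall>i\<in>class_basis j. normalize_cols W $ i $ j = 1 / card (class_basis j))
     \<longleftrightarrow> (\<forall>k. card {i. lab (g i) = k} = 1)"
proof
  assume uniform: "\<forall>j. \<forall>i\<in>class_basis j. normalize_cols W $ i $ j = 1 / card (class_basis j)"
  have rows_eq: "normalize_cols W $ i = normalize_cols W $ i'" if "lab (g i) = lab (g i')" for i i'
    unfolding vec_eq_iff
  proof
    fix j
    show "normalize_cols W $ i $ j = normalize_cols W $ i' $ j"
      using uniform that by (cases "lab (g i) = lab j") (auto simp: class_basis_def normalize_cols_W_eq_0)
  qed
  show "\<forall>k. card {i. lab (g i) = k} = 1"
  proof
    fix k
    have "i = i'" if "lab (g i) = k" "lab (g i') = k" for i i'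
      using injD[OF inj_rows_of_full_row_rank[OF full_row_rank] rows_eq] that by simp
    then have "card {i. lab (g i) = k} \<le> Suc 0"
      by (simp add: card_le_Suc0_iff_eq)
    then show "card {i. lab (g i) = k} = 1" using assms[of k] by simp
  qed
next
  assume single: "\<forall>k. card {i. lab (g i) = k} = 1"
  show "\<forall>j. \<forall>i\<in>class_basis j. normalize_cols W $ i $ j = 1 / card (class_basis j)"
  proof (intro allI ballI)
    fix j i assume "i \<in> class_basis j"
    moreover have "card (class_basis j) = 1" using single by (simp add: class_basis_def)
    ultimately have "class_basis j = {i}" by (metis card_1_singletonE singletonD)
    then show "normalize_cols W $ i $ j = 1 / card (class_basis j)"
      using col_sum_class_basis[of j] by simp
  qed
qed

lemma spectral_risk_eq_lower_iff:
  assumes "\<And>k. card {i. lab (g i) = k} \<ge> 1"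
  shows "spectral_risk (indicator_matrix lab) (normalize_cols W)
       = CARD('r) / CARD('n) * (\<Sum>k\<in>UNIV. real (card {j. lab j = k}) / real (card {i. lab (g i) = k}))
     \<longleftrightarrow> (\<forall>k. card {i. lab (g i) = k} = 1)"
proof -
  let ?c = "\<lambda>j. \<Sum>i\<in>UNIV. (normalize_cols W $ i $ j)\<^sup>2"
  let ?b = "\<lambda>j. 1 / real (card (class_basis j))"
  have "spectral_risk (indicator_matrix lab) (normalize_cols W)
       = CARD('r) / CARD('n) * (\<Sum>k\<in>UNIV. real (card {j. lab j = k}) / real (card {i. lab (g i) = k}))
     \<longleftrightarrow> (\<Sum>j\<in>UNIV. ?c j - ?b j) = 0"
    by (simp add: spectral_risk_eq sum_subtractf sum_inverse_card_class_basis[symmetric])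
  also have "\<dots> \<longleftrightarrow> (\<forall>j. ?c j = ?b j)"
    using inverse_card_class_basis_le_col_norm2 by (simp add: sum_nonneg_eq_0_iff)
  also have "\<dots> \<longleftrightarrow> (\<forall>j. \<forall>i\<in>class_basis j. normalize_cols W $ i $ j = ?b j)"
    by (simp add: col_norm2_eq_inverse_card_class_basis_iff)
  also have "\<dots> \<longleftrightarrow> (\<forall>k. card {i. lab (g i) = k} = 1)"
    by (rule uniform_cols_iff_single_basis_per_class[OF assms])
  finally show ?thesis .
qed

end

theorem theorem4:
  fixes lab :: "'n::finite \<Rightarrow> 'k::finite"
    and g :: "'r::finite \<Rightarrow> 'n"
    and W :: "real^'n^'r"
  defines "F \<equiv> indicator_matrix lab"
    and "Wt \<equiv> normalize_cols W"
    and "nk \<equiv> (\<lambda>k. card {j. lab j = k})"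
    and "rk \<equiv> (\<lambda>k. card {i. lab (g i) = k})"
  assumes basis_subset: "inj g"
    and rk_pos: "\<forall>k. rk k \<ge> 1"
    and W_nonneg: "\<forall>i j. W $ i $ j \<ge> 0"
    and W_colsum_pos: "\<forall>j. (\<Sum>i\<in>UNIV. W $ i $ j) > 0"
    and full_row_rank: "rank Wt = CARD('r)"
    and FWt_nonzero: "F ** transpose Wt \<noteq> 0"
    and ideal: "\<forall>i j. lab (g i) \<noteq> lab j \<longrightarrow> W $ i $ j = 0"
  shows "fitting_error F Wt = 1
    \<and> real CARD('r) / real CARD('n) * (\<Sum>k\<in>UNIV. real (nk k) / real (rk k)) \<le> spectral_risk F Wt
    \<and> spectral_risk F Wt \<le> real CARD('r)
    \<and> ((\<forall>j. \<exists>!i. Wt $ i $ j \<noteq> 0) \<longrightarrow> spectral_risk F Wt = real CARD('r))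
    \<and> (spectral_risk F Wt = real CARD('r) / real CARD('n) * (\<Sum>k\<in>UNIV. real (nk k) / real (rk k))
         \<longleftrightarrow> (\<forall>k. rk k = 1))"
proof -
  interpret ideal_bipartite_graph lab g W
    using W_nonneg W_colsum_pos full_row_rank ideal by unfold_locales (simp_all add: Wt_def)
  have "\<And>k. card {i. lab (g i) = k} \<ge> 1" using rk_pos by (simp add: rk_def)
  then show ?thesis
    unfolding F_def Wt_def nk_def rk_def
    using fitting_error_eq_1 spectral_risk_ge spectral_risk_le_card
      spectral_risk_eq_card_if_single_support spectral_risk_eq_lower_iff by blast
qed

end
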